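(* Fix $a, b > 0$, $\delta_1, \delta_2 > 0$, $0 < x < 1$, and $\varepsilon_{2,1}, \varepsilon_{2,2} > 0$. Let $l_1$ be a positive integer such that $$1 - e^{-\delta_2}\sum_{l=0}^{l_1-1}\frac{\delta_2^l}{l!} < \varepsilon_{2,1}.$$ For each $l = 0, 1, \dots, l_1-1$, let $m_l$ be a nonnegative integer such that $$e^{-\delta_2}\frac{\delta_2^l}{l!}\Big(1 - e^{-\delta_1}\sum_{j=0}^{m_l-1}\frac{\delta_1^j}{j!}\Big) < \varepsilon_{2,2}.$$ Define the truncated sum $\hat B = \sum_{l=0}^{l_1-1}\sum_{j=0}^{m_l-1} L_{j,l}$. Define $$U2_{a,b}^{\delta_1,\delta_2}(x) = 1 - e^{-(\delta_1+\delta_2)}\sum_{l=0}^{l_1-1}\frac{\delta_2^l}{l!}\sum_{j=0}^{m_l-1}\frac{\delta_1^j}{j!}.$$ Then $$B_{a,b}^{\delta_1,\delta_2}(x) - \hat B < U2_{a,b}^{\delta_1,\delta_2}(x) < \varepsilon_{2,1} + l_1\varepsilon_{2,2}.$$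
   Context: For $p, q > 0$, $I_x(p,q) = \frac{\int_0^x t^{p-1}(1-t)^{q-1}\,dt}{B(p,q)}$ is the regularized incomplete beta function, where $B(p,q) = \Gamma(p)\Gamma(q)/\Gamma(p+q)$. The CDF of the doubly non-central beta distribution with parameters $a, b$ and $\delta_1, \delta_2$ is $$B_{a,b}^{\delta_1,\delta_2}(x) = \sum_{j=0}^\infty\sum_{l=0}^\infty L_{j,l}, \qquad L_{j,l} = e^{-(\delta_1+\delta_2)}\frac{\delta_1^j\delta_2^l}{j!\,l!}\,I_x(j+a, l+b).$$ Empty sums are zero. *)

theory Defs
  imports "HOL-Analysis.Analysis"
begin

definition inc_beta_reg :: "real \<Rightarrow> real \<Rightarrow> real \<Rightarrow> real" where
  "inc_beta_reg x p q =
     (LBINT t=0..x. t powr (p - 1) * (1 - t) powr (q - 1)) / Beta p q"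

definition dncb_term :: "real \<Rightarrow> real \<Rightarrow> real \<Rightarrow> real \<Rightarrow> real \<Rightarrow> nat \<Rightarrow> nat \<Rightarrow> real" where
  "dncb_term a b d1 d2 x j l =
     exp (-(d1 + d2)) * (d1 ^ j * d2 ^ l / (fact j * fact l))
       * inc_beta_reg x (real j + a) (real l + b)"

definition dncb_cdf :: "real \<Rightarrow> real \<Rightarrow> real \<Rightarrow> real \<Rightarrow> real \<Rightarrow> real" where
  "dncb_cdf a b d1 d2 x = (\<Sum>j. \<Sum>l. dncb_term a b d1 d2 x j l)"

end

theory Submission
  imports Defs
begin

text \<open>
  Write \<open>L j l = p j * q l * I j l\<close> with the Poisson weights \<open>p j = e^-d1 d1^j / j!\<close>,
  \<open>q l = e^-d2 d2^l / l!\<close> and \<open>I j l = I_x(j + a, l + b)\<close>; the products \<open>p j * q l\<close> have total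
  mass 1. Since \<open>0 \<le> I j l < 1\<close>, the truncation error, which is the sum of the \<open>L j l\<close> over the
  complement of the finite truncation set \<open>T\<close>, is strictly smaller than the weight of that
  complement, and this weight is \<open>U2 = 1 - (\<Sum>(j, l)\<in>T. p j * q l)\<close>. Split by rows, the
  missing weight is that of the rows \<open>l \<ge> l1\<close>, less than \<open>eps21\<close>, plus for each row \<open>l < l1\<close>
  the missing part \<open>q l * (1 - (\<Sum>j<m l. p j))\<close>, less than \<open>eps22\<close>.
\<close>

lemma beta_density_integrable_on:
  fixes p q u v :: real
  assumes "p > 0" "q > 0" "0 \<le> u" "v \<le> 1"
  shows "(\<lambda>t. t powr (p - 1) * (1 - t) powr (q - 1)) integrable_on {u..v}"
proof (rule integrable_subinterval_real)
  show "(\<lambda>t. t powr (p - 1) * (1 - t) powr (q - 1)) integrable_on {0..1}"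
    using has_integral_Beta_real[OF assms(1,2)] by blast
qed (use assms in auto)

lemma beta_density_set_integrable:
  fixes p q u v :: real
  assumes "p > 0" "q > 0" "0 \<le> u" "v \<le> 1"
  shows "set_integrable lborel {u..v} (\<lambda>t. t powr (p - 1) * (1 - t) powr (q - 1))"
proof -
  have "(\<lambda>t. t powr (p - 1) * (1 - t) powr (q - 1)) absolutely_integrable_on {u..v}"
    using beta_density_integrable_on[OF assms] by (rule nonnegative_absolutely_integrable_1) simp
  then show ?thesis
    unfolding set_integrable_def by (subst (asm) integrable_completion) auto
qed

lemma inc_beta_reg_eq_integral:
  fixes x p q :: real
  assumes "0 \<le> x" "x \<le> 1" "p > 0" "q > 0"
  shows "inc_beta_reg x p q
           = integral {0..x} (\<lambda>t. t powr (p - 1) * (1 - t) powr (q - 1)) / Beta p q"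
  unfolding inc_beta_reg_def
  using assms beta_density_set_integrable[OF assms(3,4), of 0 x]
  by (simp add: interval_integral_eq_integral zero_ereal_def)

lemma Beta_real_pos: "p > 0 \<Longrightarrow> q > 0 \<Longrightarrow> Beta p q > (0::real)"
  unfolding Beta_def by simp

lemma inc_beta_reg_nonneg:
  fixes x p q :: real
  assumes "0 \<le> x" "x \<le> 1" "p > 0" "q > 0"
  shows "0 \<le> inc_beta_reg x p q"
proof -
  have "0 \<le> integral {0..x} (\<lambda>t. t powr (p - 1) * (1 - t) powr (q - 1))"
    using beta_density_integrable_on[OF assms(3,4) order_refl assms(2)]
    by (rule integral_nonneg) simp
  then show ?thesis
    using assms Beta_real_pos[of p q] by (simp add: inc_beta_reg_eq_integral)
qed

lemma inc_beta_reg_less_1: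
  fixes x p q :: real
  assumes "0 < x" "x < 1" "p > 0" "q > 0"
  shows "inc_beta_reg x p q < 1"
proof -
  define f where "f t = t powr (p - 1) * (1 - t) powr (q - 1)" for t :: real
  have f_int: "f integrable_on {u..v}" if "0 \<le> u" "v \<le> 1" for u v
    unfolding f_def using beta_density_integrable_on[OF assms(3,4) that] .
  define c where "c = (1 + x) / 2"
  have c: "x < c" "c < 1" using assms(2) by (auto simp: c_def)
  have "continuous_on {x..c} f"
    unfolding f_def using assms(1) c by (intro continuous_intros) auto
  then have "integral {x..c} (\<lambda>t. 0) < integral {x..c} f"
    by (rule integral_less_real[OF continuous_on_const]) (use c assms(1) in \<open>auto simp: f_def\<close>)
  also have "\<dots> \<le> integral {x..1} f"
    using f_int c assms(1) by (intro integral_subset_le) (auto simp: f_def)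
  finally have "0 < integral {x..1} f" by simp
  moreover have "integral {0..x} f + integral {x..1} f = Beta p q"
    using Henstock_Kurzweil_Integration.integral_combine[of 0 x 1 f] f_int[of 0 1] assms(1,2)
      integral_unique[OF has_integral_Beta_real[OF assms(3,4)]]
    by (simp add: f_def[abs_def])
  ultimately show ?thesis
    using assms Beta_real_pos[of p q] by (simp add: inc_beta_reg_eq_integral f_def[abs_def])
qed

definition poisson_weight :: "real \<Rightarrow> nat \<Rightarrow> real" where
  "poisson_weight d n = exp (-d) * (d ^ n / fact n)"

lemma poisson_weight_pos: "d > 0 \<Longrightarrow> 0 < poisson_weight d n"
  unfolding poisson_weight_def by simp

lemma poisson_weight_sums: "poisson_weight d sums 1"
proof -
  have "(\<lambda>n. d ^ n / fact n) sums exp d"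
    using exp_converges[of d] by (simp add: divide_inverse mult.commute)
  from sums_mult[OF this, of "exp (-d)"] show ?thesis
    unfolding poisson_weight_def by (simp add: exp_minus)
qed

lemma dncb_term_eq_poisson_weight:
  "dncb_term a b d1 d2 x j l
     = poisson_weight d1 j * poisson_weight d2 l * inc_beta_reg x (real j + a) (real l + b)"
  unfolding dncb_term_def poisson_weight_def by (simp add: exp_add[symmetric] field_simps)

lemma summable_iterated_dominated:
  fixes f w :: "nat \<Rightarrow> nat \<Rightarrow> real"
  assumes "\<And>j l. 0 \<le> f j l" "\<And>j l. f j l \<le> w j l"
    and "\<And>j. summable (w j)" "summable (\<lambda>j. \<Sum>l. w j l)"
  shows "summable (f j)" "summable (\<lambda>j. \<Sum>l. f j l)"
proof -
  show rows: "summable (f j)" for j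
    by (rule summable_comparison_test[OF _ assms(3)[of j]]) (use assms(1,2) in auto)
  show "summable (\<lambda>j. \<Sum>l. f j l)"
  proof (rule summable_comparison_test[OF _ assms(4)], intro exI allI impI)
    fix j
    have "0 \<le> (\<Sum>l. f j l)" by (rule suminf_nonneg[OF rows assms(1)])
    moreover have "(\<Sum>l. f j l) \<le> (\<Sum>l. w j l)" by (rule suminf_le[OF assms(2) rows assms(3)])
    ultimately show "norm (\<Sum>l. f j l) \<le> (\<Sum>l. w j l)" by simp
  qed
qed

lemma sum_le_iterated_suminf:
  fixes g :: "nat \<Rightarrow> nat \<Rightarrow> real"
  assumes "\<And>j l. 0 \<le> g j l" "\<And>j. summable (g j)" "summable (\<lambda>j. \<Sum>l. g j l)"
    and "finite T"
  shows "(\<Sum>(j, l)\<in>T. g j l) \<le> (\<Sum>j. \<Sum>l. g j l)"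
proof -
  obtain N where "fst ` T \<union> snd ` T \<subseteq> {..<N}"
    using finite_nat_bounded assms(4) by (meson finite_Un finite_imageI)
  then have T_box: "T \<subseteq> {..<N} \<times> {..<N}" by force
  have "(\<Sum>(j, l)\<in>T. g j l) \<le> (\<Sum>(j, l)\<in>{..<N} \<times> {..<N}. g j l)"
    by (rule sum_mono2) (use T_box assms(1) in auto)
  also have "\<dots> = (\<Sum>j<N. \<Sum>l<N. g j l)"
    by (simp add: sum.cartesian_product)
  also have "\<dots> \<le> (\<Sum>j<N. \<Sum>l. g j l)"
    by (intro sum_mono sum_le_suminf) (use assms(1,2) in auto)
  also have "\<dots> \<le> (\<Sum>j. \<Sum>l. g j l)"
    by (rule sum_le_suminf) (use assms(1-3) in \<open>auto intro: suminf_nonneg\<close>)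
  finally show ?thesis .
qed

lemma sum_less_iterated_suminf:
  fixes g :: "nat \<Rightarrow> nat \<Rightarrow> real"
  assumes "\<And>j l. 0 \<le> g j l" "\<And>j. summable (g j)" "summable (\<lambda>j. \<Sum>l. g j l)"
    and "finite T" "(j\<^sub>0, l\<^sub>0) \<notin> T" "0 < g j\<^sub>0 l\<^sub>0"
  shows "(\<Sum>(j, l)\<in>T. g j l) < (\<Sum>j. \<Sum>l. g j l)"
proof -
  have "(\<Sum>(j, l)\<in>T. g j l) < g j\<^sub>0 l\<^sub>0 + (\<Sum>(j, l)\<in>T. g j l)"
    using assms(6) by simp
  also have "\<dots> = (\<Sum>(j, l)\<in>insert (j\<^sub>0, l\<^sub>0) T. g j l)"
    using assms(4,5) by simp
  also have "\<dots> \<le> (\<Sum>j. \<Sum>l. g j l)"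
    using assms(4) by (intro sum_le_iterated_suminf assms(1-3)) simp
  finally show ?thesis .
qed

lemma dncb_term_bounds:
  assumes "a > 0" "b > 0" "d1 > 0" "d2 > 0" "0 < x" "x < 1"
  shows "0 \<le> dncb_term a b d1 d2 x j l"
    and "dncb_term a b d1 d2 x j l < poisson_weight d1 j * poisson_weight d2 l"
proof -
  have w_pos: "0 < poisson_weight d1 j * poisson_weight d2 l"
    using assms(3,4) by (simp add: poisson_weight_pos)
  have "0 \<le> inc_beta_reg x (real j + a) (real l + b)"
    and "inc_beta_reg x (real j + a) (real l + b) < 1"
    using assms(1,2,5,6) by (auto intro!: inc_beta_reg_nonneg inc_beta_reg_less_1 add_nonneg_pos)
  then show "0 \<le> dncb_term a b d1 d2 x j l"
    and "dncb_term a b d1 d2 x j l < poisson_weight d1 j * poisson_weight d2 l"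
    unfolding dncb_term_eq_poisson_weight
    using mult_strict_left_mono[OF _ w_pos, of _ 1] w_pos by (auto intro: mult_nonneg_nonneg)
qed

lemma dncb_cdf_minus_finite_sum_less:
  assumes "a > 0" "b > 0" "d1 > 0" "d2 > 0" "0 < x" "x < 1" "finite T"
  shows "dncb_cdf a b d1 d2 x - (\<Sum>(j, l)\<in>T. dncb_term a b d1 d2 x j l)
           < 1 - (\<Sum>(j, l)\<in>T. poisson_weight d1 j * poisson_weight d2 l)"
proof -
  define w where "w j l = poisson_weight d1 j * poisson_weight d2 l" for j l
  define L where "L = dncb_term a b d1 d2 x"
  define g where "g j l = w j l - L j l" for j l
  have L_nonneg: "0 \<le> L j l" and L_less: "L j l < w j l" for j l
    unfolding L_def w_def using dncb_term_bounds[OF assms(1-6)] by blast+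
  have w_rows: "w j sums poisson_weight d1 j" for j
    using sums_mult[OF poisson_weight_sums[of d2], of "poisson_weight d1 j"]
    unfolding w_def by simp
  have "(\<lambda>j. \<Sum>l. w j l) = poisson_weight d1"
    by (rule ext, rule sums_unique[OF w_rows, symmetric])
  then have w_total: "(\<lambda>j. \<Sum>l. w j l) sums 1"
    by (simp add: poisson_weight_sums)
  note L_summable = summable_iterated_dominated[OF L_nonneg less_imp_le[OF L_less]
      sums_summable[OF w_rows] sums_summable[OF w_total]]
  have g_rows: "g j sums ((\<Sum>l. w j l) - (\<Sum>l. L j l))" for j
    unfolding g_def[abs_def] using sums_summable[OF w_rows] L_summable(1)
    by (intro sums_diff summable_sums)
  have g_total: "(\<lambda>j. \<Sum>l. g j l) sums (1 - dncb_cdf a b d1 d2 x)"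
    using sums_diff[OF w_total summable_sums[OF L_summable(2)]]
    by (simp add: sums_unique[OF g_rows, symmetric] dncb_cdf_def L_def)
  have "infinite (UNIV :: (nat \<times> nat) set)" by (simp add: finite_prod)
  then obtain j\<^sub>0 l\<^sub>0 where "(j\<^sub>0, l\<^sub>0) \<notin> T"
    using ex_new_if_finite[OF _ assms(7)] by auto
  moreover have g_pos: "0 < g j l" for j l
    using L_less by (simp add: g_def)
  ultimately have "(\<Sum>(j, l)\<in>T. g j l) < (\<Sum>j. \<Sum>l. g j l)"
    using sum_less_iterated_suminf[OF less_imp_le[OF g_pos] sums_summable[OF g_rows]
        sums_summable[OF g_total] assms(7)] by blast
  then show ?thesis
    using sums_unique[OF g_total]
    by (simp add: g_def w_def L_def case_prod_beta sum_subtractf)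
qed

lemma exp_mult_double_sum_eq_poisson_weight:
  fixes d1 d2 :: real
  shows "exp (-(d1 + d2)) * (\<Sum>l\<in>A. d2 ^ l / fact l * (\<Sum>j\<in>B l. d1 ^ j / fact j))
           = (\<Sum>l\<in>A. poisson_weight d2 l * (\<Sum>j\<in>B l. poisson_weight d1 j))"
proof -
  have "exp (-(d1 + d2)) = exp (-d2) * exp (-d1)"
    by (simp add: exp_add[symmetric])
  then have "exp (-(d1 + d2)) * (d2 ^ l / fact l * (\<Sum>j\<in>B l. d1 ^ j / fact j))
      = poisson_weight d2 l * (exp (-d1) * (\<Sum>j\<in>B l. d1 ^ j / fact j))" for l
    unfolding poisson_weight_def by (simp only: mult_ac)
  then show ?thesis
    unfolding sum_distrib_left by (simp add: poisson_weight_def)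
qed

theorem mainTheorem4:
  fixes a b d1 d2 x eps21 eps22 :: real and l1 :: nat and m :: "nat \<Rightarrow> nat"
  assumes "a > 0" "b > 0" "d1 > 0" "d2 > 0" "0 < x" "x < 1" "eps21 > 0" "eps22 > 0"
    and "l1 > 0"
    and "1 - exp (-d2) * (\<Sum>l<l1. d2 ^ l / fact l) < eps21"
    and "\<forall>l<l1. exp (-d2) * (d2 ^ l / fact l) * (1 - exp (-d1) * (\<Sum>j<m l. d1 ^ j / fact j)) < eps22"
  shows "dncb_cdf a b d1 d2 x - (\<Sum>l<l1. \<Sum>j<m l. dncb_term a b d1 d2 x j l)
           < 1 - exp (-(d1 + d2)) * (\<Sum>l<l1. d2 ^ l / fact l * (\<Sum>j<m l. d1 ^ j / fact j))
       \<and> 1 - exp (-(d1 + d2)) * (\<Sum>l<l1. d2 ^ l / fact l * (\<Sum>j<m l. d1 ^ j / fact j))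
           < eps21 + real l1 * eps22"
proof -
  define T where "T = prod.swap ` Sigma {..<l1} (\<lambda>l. {..<m l})"
  have sum_T: "(\<Sum>(j, l)\<in>T. f j l) = (\<Sum>l<l1. \<Sum>j<m l. f j l)" for f :: "nat \<Rightarrow> nat \<Rightarrow> real"
    unfolding T_def by (simp add: sum.reindex sum.Sigma case_prod_beta)
  have "finite T" unfolding T_def by simp
  from dncb_cdf_minus_finite_sum_less[OF assms(1-6) this]
  have truncation_error: "dncb_cdf a b d1 d2 x - (\<Sum>l<l1. \<Sum>j<m l. dncb_term a b d1 d2 x j l)
      < 1 - (\<Sum>l<l1. poisson_weight d2 l * (\<Sum>j<m l. poisson_weight d1 j))"
    unfolding sum_T by (simp add: sum_distrib_left mult_ac)
  have "1 - (\<Sum>l<l1. poisson_weight d2 l * (\<Sum>j<m l. poisson_weight d1 j))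
      = (1 - (\<Sum>l<l1. poisson_weight d2 l))
        + (\<Sum>l<l1. poisson_weight d2 l * (1 - (\<Sum>j<m l. poisson_weight d1 j)))"
    by (simp add: algebra_simps sum_subtractf)
  also have "\<dots> < eps21 + (\<Sum>l<l1. eps22)"
    using assms(9-11)
    by (intro add_strict_mono sum_strict_mono)
       (auto simp: poisson_weight_def sum_distrib_left)
  finally show ?thesis
    unfolding exp_mult_double_sum_eq_poisson_weight using truncation_error by simp
qed

end
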